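(* Let $f:\mathbb{R}^n\to\mathbb{R}$ be of class $C^{2+}$ with $L_f$-Lipschitz continuous gradient, let $g:\mathbb{R}^n\to\mathbb{R}\cup\{+\infty\}$ be proper, lower semicontinuous and $\rho$-weakly convex, let $\varphi=f+g$ with $\operatorname{argmin}\varphi\neq\emptyset$, and suppose that for a given $x^0$ the sublevel set $\{x:\varphi(x)\le\varphi(x^0)\}$ is bounded. Then for $\gamma\in(0,\min\{1/L_f,1/\rho\})$, the sublevel set $\{x\in\mathbb{R}^n:\varphi_\gamma(x)\le\varphi_\gamma(x^0)\}$ is bounded.
   Context: $C^{2+}$: twice continuously differentiable with locally Lipschitz Hessian. $g$ is $\rho$-weakly convex if $g+\frac\rho2\|\cdot\|^2$ is convex. Forward-backward envelope: $\varphi_\gamma(x)=\inf_u\{f(x)+\langle\nabla f(x),u-x\rangle+g(u)+\frac1{2\gamma}\|u-x\|^2\}$. *)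

theory Defs
  imports "HOL-Analysis.Analysis"
begin

definition C2plus :: "('a::euclidean_space \<Rightarrow> real) \<Rightarrow> bool" where
  "C2plus f \<longleftrightarrow> (\<exists>(grad :: 'a \<Rightarrow> 'a) (H :: 'a \<Rightarrow> ('a \<Rightarrow>\<^sub>L 'a)).
      (\<forall>x. (f has_derivative (\<lambda>h. grad x \<bullet> h)) (at x)) \<and>
      (\<forall>x. (grad has_derivative blinfun_apply (H x)) (at x)) \<and>
      continuous_on UNIV H \<and>
      (\<forall>x. \<exists>e>0. \<exists>K. K-lipschitz_on (ball x e) H))"

definition proper_fun :: "('a \<Rightarrow> ereal) \<Rightarrow> bool" where
  "proper_fun g \<longleftrightarrow> (\<forall>x. g x \<noteq> -\<infinity>) \<and> (\<exists>x. g x \<noteq> \<infinity>)"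

definition lsc_fun :: "('a::topological_space \<Rightarrow> ereal) \<Rightarrow> bool" where
  "lsc_fun g \<longleftrightarrow> (\<forall>x. g x \<le> Liminf (at x) g)"

definition ext_convex :: "('a::real_vector \<Rightarrow> ereal) \<Rightarrow> bool" where
  "ext_convex h \<longleftrightarrow> (\<forall>x y t. 0 < t \<and> t < 1 \<longrightarrow>
      h ((1 - t) *\<^sub>R x + t *\<^sub>R y) \<le> ereal (1 - t) * h x + ereal t * h y)"

definition weakly_convex :: "real \<Rightarrow> ('a::real_normed_vector \<Rightarrow> ereal) \<Rightarrow> bool" where
  "weakly_convex \<rho> g \<longleftrightarrow> ext_convex (\<lambda>x. g x + ereal (\<rho> / 2 * (norm x)\<^sup>2))"

definition fbe :: "('a::euclidean_space \<Rightarrow> real) \<Rightarrow> ('a \<Rightarrow> 'a) \<Rightarrow> ('a \<Rightarrow> ereal) \<Rightarrow> real \<Rightarrow> 'a \<Rightarrow> ereal" where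
  "fbe f grad g \<gamma> x = (INF u. ereal (f x + grad x \<bullet> (u - x)) + g u
                              + ereal (1 / (2 * \<gamma>) * (norm (u - x))\<^sup>2))"

end

theory Submission
  imports Defs
begin

(* The descent lemma bounds the integrand of the forward-backward envelope from below by
   phi u + norm (u - x)^2 / (2 mu) with mu = gamma / (1 - gamma L_f) > 0, so phi_gamma dominates the
   Moreau envelope of phi = f + g, while phi_gamma x0 <= phi x0. If the Moreau envelope at x is at
   most phi x0, then, phi being bounded below, all near-minimisers lie within a fixed radius R of x;
   by lower semicontinuity they form a nested sequence of nonempty compact sets, whose common point
   lies in the bounded set {phi <= phi x0} and within R of x. *)

lemma lipschitz_gradient_quadratic_upper_bound:
  fixes f :: "'a::euclidean_space \<Rightarrow> real"
  assumes grad: "\<And>x. (f has_derivative (\<lambda>h. grad x \<bullet> h)) (at x)"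
    and lip: "L-lipschitz_on UNIV grad"
  shows "f u \<le> f x + grad x \<bullet> (u - x) + L / 2 * (norm (u - x))\<^sup>2"
proof -
  define d where "d = u - x"
  define q where "q t = f (x + t *\<^sub>R d) - t * (grad x \<bullet> d) - L / 2 * t\<^sup>2 * (norm d)\<^sup>2" for t
  have q_deriv: "DERIV q t :> (grad (x + t *\<^sub>R d) - grad x) \<bullet> d - L * t * (norm d)\<^sup>2" for t
  proof -
    have "((\<lambda>t. x + t *\<^sub>R d) has_derivative (\<lambda>h. h *\<^sub>R d)) (at t)"
      by (auto intro!: derivative_eq_intros)
    from has_derivative_compose[OF this grad]
    have "((\<lambda>t. f (x + t *\<^sub>R d)) has_real_derivative grad (x + t *\<^sub>R d) \<bullet> d) (at t)"
      by (simp add: has_field_derivative_def mult.commute[of _ "grad (x + t *\<^sub>R d) \<bullet> d"])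
    then show ?thesis unfolding q_def
      by (auto intro!: derivative_eq_intros simp: power2_eq_square algebra_simps inner_diff_left)
  qed
  have "(grad (x + t *\<^sub>R d) - grad x) \<bullet> d - L * t * (norm d)\<^sup>2 \<le> 0" if "0 \<le> t" for t
  proof -
    have "(grad (x + t *\<^sub>R d) - grad x) \<bullet> d \<le> norm (grad (x + t *\<^sub>R d) - grad x) * norm d"
      by (rule norm_cauchy_schwarz)
    also have "\<dots> \<le> L * norm (t *\<^sub>R d) * norm d"
      using lipschitz_onD[OF lip, of "x + t *\<^sub>R d" x] by (simp add: dist_norm mult_right_mono)
    also have "\<dots> = L * t * (norm d)\<^sup>2"
      using that by (simp add: power2_eq_square)
    finally show ?thesis by simp
  qed
  then have "q 1 \<le> q 0"
    using q_deriv by (intro DERIV_nonpos_imp_nonincreasing[of 0 1 q]) (auto simp del: diff_le_0_iff_le)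
  then show ?thesis unfolding q_def d_def by simp
qed

lemma closed_sublevel_continuous_add_lsc:
  fixes f :: "'a::t2_space \<Rightarrow> real" and g :: "'a \<Rightarrow> ereal"
  assumes f: "\<And>x. isCont f x" and g: "lsc_fun g"
  shows "closed {x. ereal (f x) + g x \<le> ereal c}" (is "closed ?S")
  unfolding closed_def
proof (rule open_subopen[THEN iffD2], intro ballI)
  fix x assume x: "x \<in> - ?S"
  then have "ereal (c - f x) < g x"
    by (cases "g x") auto
  then obtain z where z: "ereal (c - f x) < ereal z" "ereal z < g x"
    using ereal_dense2 by blast
  have "g x \<le> Liminf (at x) g"
    using g unfolding lsc_fun_def by blast
  then have "\<forall>\<^sub>F y in at x. ereal z < g y"
    using z(2) le_Liminf_iff by blast
  moreover have "\<forall>\<^sub>F y in at x. c - z < f y"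
    using z(1) f[of x, unfolded isCont_def] by (intro order_tendstoD(1)) auto
  ultimately have "\<forall>\<^sub>F y in at x. y \<in> - ?S"
  proof eventually_elim
    case (elim y)
    then show ?case by (cases "g y") auto
  qed
  then have "\<forall>\<^sub>F y in nhds x. y \<in> - ?S"
    using x eventually_nhds_conv_at by blast
  then show "\<exists>T. open T \<and> x \<in> T \<and> T \<subseteq> - ?S"
    unfolding eventually_nhds by blast
qed

definition moreau_envelope :: "('a::real_normed_vector \<Rightarrow> ereal) \<Rightarrow> real \<Rightarrow> 'a \<Rightarrow> ereal" where
  "moreau_envelope \<phi> \<mu> x = (INF u. \<phi> u + ereal (1 / (2 * \<mu>) * (norm (u - x))\<^sup>2))"

lemma moreau_envelope_le_imp_near_sublevel:
  fixes \<phi> :: "'a::{real_normed_vector, heine_borel} \<Rightarrow> ereal"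
  assumes closed: "\<And>t. closed {u. \<phi> u \<le> ereal t}" and lower: "\<And>u. ereal m \<le> \<phi> u"
    and \<mu>: "0 < \<mu>" and env: "moreau_envelope \<phi> \<mu> x \<le> ereal a"
  shows "\<exists>y. \<phi> y \<le> ereal a \<and> dist x y \<le> sqrt (2 * \<mu> * (a + 1 - m))"
proof -
  define R where "R = sqrt (2 * \<mu> * (a + 1 - m))"
  define F where "F n = {u. \<phi> u \<le> ereal (a + inverse (Suc n))} \<inter> cball x R" for n
  have F_nonempty: "F n \<noteq> {}" for n
  proof -
    have "moreau_envelope \<phi> \<mu> x < ereal (a + inverse (Suc n))"
      using env by (rule le_less_trans) simp
    then obtain u where u: "\<phi> u + ereal (1 / (2 * \<mu>) * (norm (u - x))\<^sup>2) < ereal (a + inverse (Suc n))"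
      unfolding moreau_envelope_def by (auto simp: INF_less_iff)
    then obtain r where r: "\<phi> u = ereal r"
      using lower[of u] by (cases "\<phi> u") auto
    have "r + (norm (u - x))\<^sup>2 / (2 * \<mu>) < a + inverse (Suc n)"
      using u r by simp
    moreover have "m \<le> r" "inverse (Suc n) \<le> 1" "0 \<le> (norm (u - x))\<^sup>2 / (2 * \<mu>)"
      using lower[of u] r \<mu> by (auto simp: inverse_le_1_iff)
    ultimately have "(norm (u - x))\<^sup>2 / (2 * \<mu>) \<le> a + 1 - m" and "r \<le> a + inverse (Suc n)"
      by linarith+
    then have "(norm (u - x))\<^sup>2 \<le> 2 * \<mu> * (a + 1 - m)"
      using \<mu> by (simp add: divide_le_eq mult.commute)
    then have "norm (u - x) \<le> R" and "\<phi> u \<le> ereal (a + inverse (Suc n))"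
      using \<open>r \<le> a + inverse (Suc n)\<close> r by (simp_all add: R_def real_le_rsqrt)
    then have "u \<in> F n"
      by (simp add: F_def dist_norm norm_minus_commute)
    then show ?thesis by blast
  qed
  have F_compact: "compact (F n)" for n
    unfolding F_def using closed compact_cball by (rule closed_Int_compact)
  have F_decreasing: "F n \<subseteq> F k" if "k \<le> n" for k n
  proof -
    have "ereal (a + inverse (Suc n)) \<le> ereal (a + inverse (Suc k))"
      using that by (simp add: le_imp_inverse_le)
    from order.trans[OF _ this] show ?thesis
      unfolding F_def by blast
  qed
  have "\<Inter> (range F) \<noteq> {}"
    by (rule compact_nest[OF F_compact F_nonempty F_decreasing])
  then obtain y where y: "\<And>n. y \<in> F n"
    by blast
  have "\<phi> y \<le> ereal a"
  proof (rule ereal_le_epsilon2)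
    fix e :: real assume "0 < e"
    then obtain n where "inverse (real (Suc n)) < e"
      using reals_Archimedean by blast
    then have "ereal (a + inverse (Suc n)) \<le> ereal a + ereal e"
      by simp
    from order.trans[OF _ this] y[of n] show "\<phi> y \<le> ereal a + ereal e"
      unfolding F_def by blast
  qed
  moreover have "dist x y \<le> R"
    using y[of 0] by (simp add: F_def)
  ultimately show ?thesis
    using R_def by blast
qed

lemma bounded_moreau_envelope_sublevel:
  fixes \<phi> :: "'a::{real_normed_vector, heine_borel} \<Rightarrow> ereal"
  assumes closed: "\<And>t. closed {u. \<phi> u \<le> ereal t}" and lower: "\<And>u. ereal m \<le> \<phi> u"
    and \<mu>: "0 < \<mu>" and bdd: "bounded {u. \<phi> u \<le> ereal a}"
  shows "bounded {x. moreau_envelope \<phi> \<mu> x \<le> ereal a}"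
proof -
  obtain B where B: "\<And>y. \<phi> y \<le> ereal a \<Longrightarrow> norm y \<le> B"
    using bdd unfolding bounded_iff by auto
  have "norm x \<le> B + sqrt (2 * \<mu> * (a + 1 - m))" if env: "moreau_envelope \<phi> \<mu> x \<le> ereal a" for x
  proof -
    obtain y where "\<phi> y \<le> ereal a" and "dist x y \<le> sqrt (2 * \<mu> * (a + 1 - m))"
      using moreau_envelope_le_imp_near_sublevel[OF closed lower \<mu> env] by blast
    moreover have "norm x \<le> norm y + dist x y"
      using norm_triangle_sub[of x y] by (simp add: dist_norm)
    ultimately show ?thesis
      using B by fastforce
  qed
  then show ?thesis
    unfolding bounded_iff by blast
qed

lemma fbe_le_objective: "fbe f grad g \<gamma> x \<le> ereal (f x) + g x"
  unfolding fbe_def by (rule INF_lower2[of x]) simp_all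

lemma moreau_envelope_le_fbe:
  fixes f :: "'a::euclidean_space \<Rightarrow> real"
  assumes grad: "\<And>x. (f has_derivative (\<lambda>h. grad x \<bullet> h)) (at x)"
    and lip: "L-lipschitz_on UNIV grad"
    and \<gamma>: "0 < \<gamma>" "\<gamma> * L < 1"
  shows "moreau_envelope (\<lambda>u. ereal (f u) + g u) (\<gamma> / (1 - \<gamma> * L)) x \<le> fbe f grad g \<gamma> x"
  unfolding moreau_envelope_def fbe_def
proof (rule INF_mono')
  fix u
  have weight: "1 / (2 * (\<gamma> / (1 - \<gamma> * L))) = 1 / (2 * \<gamma>) - L / 2"
    using \<gamma> by (simp add: field_simps)
  have "f u \<le> f x + grad x \<bullet> (u - x) + L / 2 * (norm (u - x))\<^sup>2"
    by (rule lipschitz_gradient_quadratic_upper_bound[OF grad lip])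
  then show "ereal (f u) + g u + ereal (1 / (2 * (\<gamma> / (1 - \<gamma> * L))) * (norm (u - x))\<^sup>2)
      \<le> ereal (f x + grad x \<bullet> (u - x)) + g u + ereal (1 / (2 * \<gamma>) * (norm (u - x))\<^sup>2)"
    unfolding weight by (cases "g u") (auto simp: algebra_simps)
qed

theorem lemma4p4:
  fixes f :: "'a::euclidean_space \<Rightarrow> real"
    and grad :: "'a \<Rightarrow> 'a"
    and g :: "'a \<Rightarrow> ereal"
    and Lf \<rho> \<gamma> :: real
    and x0 :: 'a
  assumes f_C2: "C2plus f"
    and grad: "\<And>x. (f has_derivative (\<lambda>h. grad x \<bullet> h)) (at x)"
    and grad_lip: "Lf-lipschitz_on UNIV grad"
    and g_proper: "proper_fun g"
    and g_lsc: "lsc_fun g"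
    and g_wc: "weakly_convex \<rho> g"
    and argmin_ne: "\<exists>xs. \<forall>x. ereal (f xs) + g xs \<le> ereal (f x) + g x"
    and sub_bdd: "bounded {x. ereal (f x) + g x \<le> ereal (f x0) + g x0}"
    and Lf_pos: "0 < Lf"
    and rho_pos: "0 < \<rho>"
    and gam_pos: "0 < \<gamma>"
    and gam_L: "\<gamma> < 1 / Lf"
    and gam_rho: "\<gamma> < 1 / \<rho>"
  shows "bounded {x. fbe f grad g \<gamma> x \<le> fbe f grad g \<gamma> x0}"
proof -
  define \<phi> where "\<phi> x = ereal (f x) + g x" for x
  obtain xs where xs: "\<And>x. \<phi> xs \<le> \<phi> x"
    using argmin_ne unfolding \<phi>_def by blast
  have "\<phi> x0 \<noteq> \<infinity>"
    using sub_bdd not_bounded_UNIV by (force simp: \<phi>_def)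
  moreover have "\<phi> xs \<noteq> -\<infinity>"
    using g_proper by (simp add: \<phi>_def proper_fun_def)
  ultimately obtain a m where a: "\<phi> x0 = ereal a" and m: "\<phi> xs = ereal m"
    using xs[of x0] by (cases "\<phi> x0"; cases "\<phi> xs") auto
  have "isCont f x" for x
    using grad by (rule has_derivative_continuous)
  then have closed: "closed {u. \<phi> u \<le> ereal t}" for t
    unfolding \<phi>_def using g_lsc by (rule closed_sublevel_continuous_add_lsc)
  have \<gamma>: "0 < \<gamma>" "\<gamma> * Lf < 1"
    using gam_pos gam_L Lf_pos by (auto simp: field_simps)
  have "ereal m \<le> \<phi> u" for u
    using xs m by metis
  moreover have "bounded {u. \<phi> u \<le> ereal a}"
    using sub_bdd a by (simp add: \<phi>_def)
  ultimately have envelope_bounded: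
    "bounded {x. moreau_envelope \<phi> (\<gamma> / (1 - \<gamma> * Lf)) x \<le> ereal a}"
    using \<gamma> by (intro bounded_moreau_envelope_sublevel[OF closed]) auto
  have "fbe f grad g \<gamma> x0 \<le> ereal a"
    using fbe_le_objective a unfolding \<phi>_def by metis
  then have "{x. fbe f grad g \<gamma> x \<le> fbe f grad g \<gamma> x0}
      \<subseteq> {x. moreau_envelope \<phi> (\<gamma> / (1 - \<gamma> * Lf)) x \<le> ereal a}"
    using moreau_envelope_le_fbe[OF grad grad_lip \<gamma>] unfolding \<phi>_def
    by (blast intro: order.trans)
  with envelope_bounded show ?thesis
    by (rule bounded_subset)
qed

end
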